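(* Let $v,w\in\mathbb{Z}^2$ be primitive with $v\times w=1$, and let $u_1,\dots,u_n\in\mathbb{Z}^2$ be primitive normals of lines through the origin subdividing the wedge determined by $v,w$ (each $u_i$ a positive linear combination of $v$ and $w$, listed counterclockwise), such that $v\times u_1=u_i\times u_{i+1}=u_n\times w=1$ for $1\le i\le n-1$. Set $u_0=v$, $u_{n+1}=w$. Let $z\in\mathbb{C}$ and $\underline\omega\in\mathbb{C}^2$ with $\underline\omega\times u_i\notin\mathbb{R}$ for $0\le i\le n+1$. Then $$\prod_{i=0}^{n}\big(e^{2\pi iz}\,\big|\,e^{2\pi i\,\underline\omega\times u_i},e^{-2\pi i\,\underline\omega\times u_{i+1}}\big)_\infty=\big(e^{2\pi iz}\,\big|\,e^{2\pi i\,\underline\omega\times v},e^{-2\pi i\,\underline\omega\times w}\big)_\infty.$$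
   Context: For $a,b\in\mathbb{C}^2$, $a\times b=\det[a,b]=a_1b_2-a_2b_1$. q-shifted factorial: for $x\in\mathbb{C}$ and $q_j=e^{2\pi i\omega_j}$, $\omega_j\in\mathbb{C}\setminus\mathbb{R}$: if all $|q_j|<1$, $(x|q_0,q_1)_\infty=\prod_{j_0,j_1\ge0}(1-xq_0^{j_0}q_1^{j_1})$; in general (symmetric in the $q_j$), if $|q_0|>1>|q_1|$ then $(x|q_0,q_1)_\infty=(q_0^{-1}x|q_0^{-1},q_1)_\infty^{-1}$, and if both $|q_0|,|q_1|>1$ then $(x|q_0,q_1)_\infty=(q_0^{-1}q_1^{-1}x|q_0^{-1},q_1^{-1})_\infty$. *)

theory Defs
  imports Complex_Main
begin

definition icross :: "int \<times> int \<Rightarrow> int \<times> int \<Rightarrow> int" where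
  "icross a b = fst a * snd b - snd a * fst b"

definition ccross :: "complex \<times> complex \<Rightarrow> int \<times> int \<Rightarrow> complex" where
  "ccross a b = fst a * of_int (snd b) - snd a * of_int (fst b)"

definition primitive :: "int \<times> int \<Rightarrow> bool" where
  "primitive a \<longleftrightarrow> gcd (fst a) (snd a) = 1"

text \<open>The double infinite product prod over j0,j1 >= 0 of (1 - x q0^j0 q1^j1),
  taken as the limit of the square partial products (for |q0|,|q1| < 1 it converges absolutely).\<close>

definition qpoch_base :: "complex \<Rightarrow> complex \<Rightarrow> complex \<Rightarrow> complex" where
  "qpoch_base x q0 q1 =
     lim (\<lambda>N. \<Prod>p\<in>{..<N} \<times> {..<N}. 1 - x * q0 ^ fst p * q1 ^ snd p)"

definition qpoch :: "complex \<Rightarrow> complex \<Rightarrow> complex \<Rightarrow> complex" where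
  "qpoch x q0 q1 =
     (if norm q0 < 1 \<and> norm q1 < 1 then qpoch_base x q0 q1
      else if norm q0 > 1 \<and> norm q1 < 1 then inverse (qpoch_base (x / q0) (1 / q0) q1)
      else if norm q0 < 1 \<and> norm q1 > 1 then inverse (qpoch_base (x / q1) q0 (1 / q1))
      else if norm q0 > 1 \<and> norm q1 > 1 then qpoch_base (x / (q0 * q1)) (1 / q0) (1 / q1)
      else undefined)"

text \<open>(x | q0, q1)_infinity is a finite value (no pole): in the mixed cases the
  product being inverted is nonzero.\<close>

definition qpoch_finite :: "complex \<Rightarrow> complex \<Rightarrow> complex \<Rightarrow> bool" where
  "qpoch_finite x q0 q1 \<longleftrightarrow>
     (norm q0 > 1 \<and> norm q1 < 1 \<longrightarrow> qpoch_base (x / q0) (1 / q0) q1 \<noteq> 0) \<and>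
     (norm q0 < 1 \<and> norm q1 > 1 \<longrightarrow> qpoch_base (x / q1) q0 (1 / q1) \<noteq> 0)"

definition e2pi :: "complex \<Rightarrow> complex" where
  "e2pi c = exp (2 * of_real pi * \<i> * c)"

end

theory Submission
  imports Defs "HOL-Analysis.Analysis"
begin

text \<open>For \<open>|q0|, |q1| < 1\<close> the product \<open>(x | q0, q1)\<close> is an absolutely convergent product
  of factors \<open>1 - x a^m b^l\<close> over a lattice cone in \<open>\<int>\<^sup>2\<close>; in the other cases, after
  replacing \<open>q0\<close> or \<open>q1\<close> by its inverse, so is the value or its reciprocal. Splitting a cone
  into two disjoint cones gives \<open>(x | a, b/a) (x | a/b, b) = (x | a, b)\<close> in every configuration
  of \<open>|a|\<close>, \<open>|b|\<close> and \<open>1\<close> (by the symmetry in \<open>q0, q1\<close> it suffices to treat \<open>|a| < |b|\<close>).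
  For \<open>a = e2pi (\<omega> \<times> u (i - 1))\<close> and \<open>b = e2pi (- \<omega> \<times> u (i + 1))\<close> this merges two
  neighbouring factors whenever \<open>u i = u (i - 1) + u (i + 1)\<close>. Such an interior vector always
  exists in a unimodular fan, namely the first maximum of \<open>u i \<times> w + v \<times> u i\<close>; deleting it
  leaves a unimodular fan, and the theorem follows by induction on \<open>n\<close>.\<close>

section \<open>Products over absolutely summable families\<close>

text \<open>The product of the factors \<open>1 - g i\<close> over \<open>S\<close> for a norm-summable family \<open>g\<close>:
  the finitely many factors with \<open>norm (g i) \<ge> 1/2\<close> are multiplied directly, the others
  through the absolutely summable principal logarithms.\<close>

definition prod_one_minus_large :: "('a \<Rightarrow> complex) \<Rightarrow> 'a set \<Rightarrow> 'a set" where
  "prod_one_minus_large g S = {i \<in> S. 1/2 \<le> norm (g i)}"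

definition prod_one_minus_small :: "('a \<Rightarrow> complex) \<Rightarrow> 'a set \<Rightarrow> 'a set" where
  "prod_one_minus_small g S = {i \<in> S. norm (g i) < 1/2}"

definition prod_one_minus :: "('a \<Rightarrow> complex) \<Rightarrow> 'a set \<Rightarrow> complex" where
  "prod_one_minus g S = (\<Prod>i\<in>prod_one_minus_large g S. 1 - g i) * exp (\<Sum>\<^sub>\<infinity>i\<in>prod_one_minus_small g S. Ln (1 - g i))"

lemma finite_prod_one_minus_large:
  assumes "(\<lambda>i. norm (g i)) summable_on S"
  shows "finite (prod_one_minus_large g S)"
proof (rule ccontr)
  assume inf: "infinite (prod_one_minus_large g S)"
  define M where "M = (\<Sum>\<^sub>\<infinity>i\<in>S. norm (g i))"
  obtain n :: nat where n: "real n > 2 * M" using reals_Archimedean2 by blast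
  obtain B where B: "finite B" "card B = n" "B \<subseteq> prod_one_minus_large g S"
    using infinite_arbitrarily_large[OF inf] by blast
  have "(\<Sum>i\<in>B. norm (g i)) \<le> M"
    unfolding M_def using B by (intro finite_sum_le_infsum assms) (auto simp: prod_one_minus_large_def)
  moreover have "(\<Sum>i\<in>B. 1/2) \<le> (\<Sum>i\<in>B. norm (g i))"
    using B by (intro sum_mono) (auto simp: prod_one_minus_large_def)
  ultimately show False using B n by simp
qed

lemma summable_on_norm_Ln_prod_one_minus_small:
  assumes "(\<lambda>i. norm (g i)) summable_on S"
  shows "(\<lambda>i. norm (Ln (1 - g i))) summable_on prod_one_minus_small g S"
proof (rule Infinite_Sum.abs_summable_on_comparison_test')
  show "(\<lambda>i. 2 * norm (g i)) summable_on prod_one_minus_small g S"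
    by (intro summable_on_cmult_right summable_on_subset_banach[OF assms])
      (auto simp: prod_one_minus_small_def)
next
  fix i assume "i \<in> prod_one_minus_small g S"
  then have "norm (- g i) < 1/2" by (simp add: prod_one_minus_small_def)
  from norm_Ln_le[OF this] show "norm (Ln (1 - g i)) \<le> 2 * norm (g i)" by simp
qed

lemma has_sum_tendsto_exhausting:
  assumes "(f has_sum s) S" "\<And>N. finite (F N)" "\<And>N. F N \<subseteq> S"
    and "\<And>X. finite X \<Longrightarrow> X \<subseteq> S \<Longrightarrow> eventually (\<lambda>N. X \<subseteq> F N) sequentially"
  shows "(\<lambda>N. sum f (F N)) \<longlonglongrightarrow> s"
proof -
  have "filterlim F (finite_subsets_at_top S) sequentially"
    unfolding filterlim_def le_filter_def eventually_filtermap
  proof (intro allI impI)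
    fix P assume "eventually P (finite_subsets_at_top S)"
    then obtain X where X: "finite X" "X \<subseteq> S" "\<forall>Y. finite Y \<and> X \<subseteq> Y \<and> Y \<subseteq> S \<longrightarrow> P Y"
      unfolding eventually_finite_subsets_at_top by blast
    from assms(4)[OF X(1,2)] show "eventually (\<lambda>N. P (F N)) sequentially"
    proof (rule eventually_mono)
      fix N assume "X \<subseteq> F N"
      then show "P (F N)" using X(3) assms(2,3) by blast
    qed
  qed
  then show ?thesis by (rule filterlim_compose[OF assms(1)[unfolded has_sum_def]])
qed

lemma prod_one_minus_finite_split:
  assumes "finite T" "prod_one_minus_large g S \<subseteq> T" "T \<subseteq> S"
  shows "(\<Prod>i\<in>T. 1 - g i)
    = (\<Prod>i\<in>prod_one_minus_large g S. 1 - g i) * exp (\<Sum>i\<in>T \<inter> prod_one_minus_small g S. Ln (1 - g i))"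
proof -
  let ?L = "prod_one_minus_large g S" and ?S = "prod_one_minus_small g S"
  have "exp (\<Sum>i\<in>T \<inter> ?S. Ln (1 - g i)) = (\<Prod>i\<in>T \<inter> ?S. exp (Ln (1 - g i)))"
    by (rule exp_sum) (use assms(1) in auto)
  also have "\<dots> = (\<Prod>i\<in>T \<inter> ?S. 1 - g i)"
    by (intro prod.cong exp_Ln) (auto simp: prod_one_minus_small_def)
  finally have exp_log: "exp (\<Sum>i\<in>T \<inter> ?S. Ln (1 - g i)) = (\<Prod>i\<in>T \<inter> ?S. 1 - g i)" .
  have "T = ?L \<union> (T \<inter> ?S)"
    using assms(2,3) by (auto simp: prod_one_minus_large_def prod_one_minus_small_def)
  then have "(\<Prod>i\<in>T. 1 - g i) = (\<Prod>i\<in>?L \<union> (T \<inter> ?S). 1 - g i)"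
    by (rule arg_cong)
  also have "\<dots> = (\<Prod>i\<in>?L. 1 - g i) * (\<Prod>i\<in>T \<inter> ?S. 1 - g i)"
    by (rule prod.union_disjoint)
      (use assms(1,2) finite_subset in \<open>auto simp: prod_one_minus_large_def prod_one_minus_small_def\<close>)
  finally show ?thesis by (simp add: exp_log)
qed

lemma prod_one_minus_tendsto_exhausting:
  assumes sum: "(\<lambda>i. norm (g i)) summable_on S"
    and fin: "\<And>N. finite (F N)" and sub: "\<And>N. F N \<subseteq> S"
    and exh: "\<And>X. finite X \<Longrightarrow> X \<subseteq> S \<Longrightarrow> eventually (\<lambda>N. X \<subseteq> F N) sequentially"
  shows "(\<lambda>N. \<Prod>i\<in>F N. 1 - g i) \<longlonglongrightarrow> prod_one_minus g S"
proof -
  let ?L = "prod_one_minus_large g S" and ?S = "prod_one_minus_small g S"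
  have fin_L: "finite ?L" by (rule finite_prod_one_minus_large[OF sum])
  have "((\<lambda>i. Ln (1 - g i)) has_sum (\<Sum>\<^sub>\<infinity>i\<in>?S. Ln (1 - g i))) ?S"
    by (rule has_sum_infsum, rule Infinite_Sum.abs_summable_summable)
      (rule summable_on_norm_Ln_prod_one_minus_small[OF sum])
  then have lim_log: "(\<lambda>N. \<Sum>i\<in>F N \<inter> ?S. Ln (1 - g i)) \<longlonglongrightarrow> (\<Sum>\<^sub>\<infinity>i\<in>?S. Ln (1 - g i))"
  proof (rule has_sum_tendsto_exhausting)
    fix X assume X: "finite X" "X \<subseteq> ?S"
    then have "X \<subseteq> S" by (auto simp: prod_one_minus_small_def)
    from exh[OF X(1) this] show "eventually (\<lambda>N. X \<subseteq> F N \<inter> ?S) sequentially"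
      by (rule eventually_mono) (use X in auto)
  qed (use fin in auto)
  have lim: "(\<lambda>N. (\<Prod>i\<in>?L. 1 - g i) * exp (\<Sum>i\<in>F N \<inter> ?S. Ln (1 - g i))) \<longlonglongrightarrow> prod_one_minus g S"
    unfolding prod_one_minus_def by (intro tendsto_mult tendsto_const tendsto_exp lim_log)
  have "eventually (\<lambda>N. ?L \<subseteq> F N) sequentially"
    by (rule exh[OF fin_L]) (auto simp: prod_one_minus_large_def)
  then have "eventually (\<lambda>N. (\<Prod>i\<in>?L. 1 - g i) * exp (\<Sum>i\<in>F N \<inter> ?S. Ln (1 - g i))
      = (\<Prod>i\<in>F N. 1 - g i)) sequentially"
    by (rule eventually_mono) (use prod_one_minus_finite_split fin sub in metis)
  with lim show ?thesis by (rule Lim_transform_eventually)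
qed

lemma prod_one_minus_Un_disjoint:
  assumes A: "(\<lambda>i. norm (g i)) summable_on A" and B: "(\<lambda>i. norm (g i)) summable_on B"
    and "A \<inter> B = {}"
  shows "prod_one_minus g (A \<union> B) = prod_one_minus g A * prod_one_minus g B"
proof -
  have large: "prod_one_minus_large g (A \<union> B) = prod_one_minus_large g A \<union> prod_one_minus_large g B"
    and small: "prod_one_minus_small g (A \<union> B) = prod_one_minus_small g A \<union> prod_one_minus_small g B"
    by (auto simp: prod_one_minus_large_def prod_one_minus_small_def)
  have prod_large: "(\<Prod>i\<in>prod_one_minus_large g (A \<union> B). 1 - g i)
      = (\<Prod>i\<in>prod_one_minus_large g A. 1 - g i) * (\<Prod>i\<in>prod_one_minus_large g B. 1 - g i)"
    unfolding large by (rule prod.union_disjoint)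
      (use finite_prod_one_minus_large[OF A] finite_prod_one_minus_large[OF B] assms(3) in \<open>auto simp: prod_one_minus_large_def\<close>)
  have sum_small: "(\<Sum>\<^sub>\<infinity>i\<in>prod_one_minus_small g (A \<union> B). Ln (1 - g i))
      = (\<Sum>\<^sub>\<infinity>i\<in>prod_one_minus_small g A. Ln (1 - g i)) + (\<Sum>\<^sub>\<infinity>i\<in>prod_one_minus_small g B. Ln (1 - g i))"
    unfolding small by (rule infsum_Un_disjoint)
      (use Infinite_Sum.abs_summable_summable[OF summable_on_norm_Ln_prod_one_minus_small[OF A]]
        Infinite_Sum.abs_summable_summable[OF summable_on_norm_Ln_prod_one_minus_small[OF B]] assms(3)
        in \<open>auto simp: prod_one_minus_small_def\<close>)
  show ?thesis
    unfolding prod_one_minus_def prod_large sum_small exp_add by (simp add: mult_ac)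
qed

lemma prod_one_minus_reindex:
  assumes "inj_on h A"
  shows "prod_one_minus (g \<circ> h) A = prod_one_minus g (h ` A)"
proof -
  have large: "prod_one_minus_large g (h ` A) = h ` prod_one_minus_large (g \<circ> h) A"
    and small: "prod_one_minus_small g (h ` A) = h ` prod_one_minus_small (g \<circ> h) A"
    by (auto simp: prod_one_minus_large_def prod_one_minus_small_def)
  have inj_large: "inj_on h (prod_one_minus_large (g \<circ> h) A)"
    and inj_small: "inj_on h (prod_one_minus_small (g \<circ> h) A)"
    by (auto intro: inj_on_subset[OF assms] simp: prod_one_minus_large_def prod_one_minus_small_def)
  show ?thesis
    unfolding prod_one_minus_def large small prod.reindex[OF inj_large] infsum_reindex[OF inj_small]
    by (simp add: o_def)
qed

section \<open>The q-shifted factorial as a product over lattice cones\<close>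

lemma finite_nat_pairs_subset_square:
  assumes "finite (X :: (nat \<times> nat) set)"
  obtains N where "X \<subseteq> {..<N} \<times> {..<N}"
proof -
  obtain k1 k2 where "fst ` X \<subseteq> {..<k1}" "snd ` X \<subseteq> {..<k2}"
    using finite_nat_bounded assms by (metis finite_imageI)
  then have "X \<subseteq> {..<max k1 k2} \<times> {..<max k1 k2}" by force
  then show thesis by (rule that)
qed

lemma summable_on_norm_geometric2:
  fixes p q y :: complex
  assumes "norm p < 1" "norm q < 1"
  shows "(\<lambda>jk::nat \<times> nat. norm (y * p ^ fst jk * q ^ snd jk)) summable_on UNIV"
proof (rule nonneg_bdd_above_summable_on)
  let ?B = "norm y * (1 / (1 - norm p) * (1 / (1 - norm q)))"
  show "bdd_above (sum (\<lambda>jk::nat \<times> nat. norm (y * p ^ fst jk * q ^ snd jk)) ` {F. F \<subseteq> UNIV \<and> finite F})"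
  proof (rule bdd_aboveI2)
    fix F :: "(nat \<times> nat) set" assume "F \<in> {F. F \<subseteq> UNIV \<and> finite F}"
    then obtain N where sub: "F \<subseteq> {..<N} \<times> {..<N}"
      using finite_nat_pairs_subset_square by blast
    have "(\<Sum>jk\<in>F. norm (y * p ^ fst jk * q ^ snd jk)) \<le> (\<Sum>jk\<in>{..<N} \<times> {..<N}. norm (y * p ^ fst jk * q ^ snd jk))"
      by (rule sum_mono2) (use sub in auto)
    also have "\<dots> = (\<Sum>j<N. \<Sum>k<N. norm y * (norm p ^ j * norm q ^ k))"
      by (simp add: sum.cartesian_product norm_mult norm_power mult_ac case_prod_beta)
    also have "\<dots> = norm y * ((\<Sum>j<N. norm p ^ j) * (\<Sum>k<N. norm q ^ k))"
      by (subst sum_product) (simp add: sum_distrib_left)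
    also have "\<dots> \<le> ?B"
      using assms by (intro mult_left_mono mult_mono sum_nonneg) (simp_all add: sum_gp_strict divide_right_mono)
    finally show "(\<Sum>jk\<in>F. norm (y * p ^ fst jk * q ^ snd jk)) \<le> ?B" .
  qed
qed auto

lemma qpoch_base_eq_prod_one_minus:
  assumes "norm p < 1" "norm q < 1"
  shows "qpoch_base y p q = prod_one_minus (\<lambda>jk::nat \<times> nat. y * p ^ fst jk * q ^ snd jk) UNIV"
  unfolding qpoch_base_def
proof (rule limI, rule prod_one_minus_tendsto_exhausting[OF summable_on_norm_geometric2[OF assms]])
  fix X :: "(nat \<times> nat) set" assume "finite X"
  then obtain k where "X \<subseteq> {..<k} \<times> {..<k}"
    by (rule finite_nat_pairs_subset_square)
  then show "eventually (\<lambda>N. X \<subseteq> {..<N} \<times> {..<N}) sequentially"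
    by (intro eventually_sequentiallyI[of k]) fastforce
qed auto

lemma qpoch_base_commute:
  assumes "norm p < 1" "norm q < 1"
  shows "qpoch_base y p q = qpoch_base y q p"
proof -
  have "qpoch_base y q p = prod_one_minus ((\<lambda>jk. y * p ^ fst jk * q ^ snd jk) \<circ> prod.swap) UNIV"
    using qpoch_base_eq_prod_one_minus[OF assms(2,1)] by (simp add: o_def mult_ac)
  also have "\<dots> = prod_one_minus (\<lambda>jk::nat \<times> nat. y * p ^ fst jk * q ^ snd jk) UNIV"
    by (simp add: prod_one_minus_reindex)
  finally show ?thesis using qpoch_base_eq_prod_one_minus[OF assms] by simp
qed

lemma norm_inverse_less_one: "1 < norm q \<Longrightarrow> norm (1 / q) < 1"
  for q :: complex
  by (simp add: norm_divide divide_less_eq)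

lemma qpoch_commute: "qpoch x q0 q1 = qpoch x q1 q0"
proof -
  consider "norm q0 < 1" "norm q1 < 1" | "1 < norm q0" "norm q1 < 1" | "norm q0 < 1" "1 < norm q1"
    | "1 < norm q0" "1 < norm q1" | "norm q0 = 1" | "norm q1 = 1"
    by linarith
  then show ?thesis
  proof cases
    case 1
    then show ?thesis using qpoch_base_commute[of q0 q1 x] by (simp add: qpoch_def)
  next
    case 2
    then show ?thesis
      using qpoch_base_commute[of "1 / q0" q1 "x / q0"] norm_inverse_less_one[of q0]
      by (simp add: qpoch_def)
  next
    case 3
    then show ?thesis
      using qpoch_base_commute[of q0 "1 / q1" "x / q1"] norm_inverse_less_one[of q1]
      by (simp add: qpoch_def)
  next
    case 4
    then show ?thesis
      using qpoch_base_commute[of "1 / q0" "1 / q1" "x / (q0 * q1)"] norm_inverse_less_one[of q0]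
        norm_inverse_less_one[of q1]
      by (simp add: qpoch_def mult.commute)
  qed (simp_all add: qpoch_def)
qed

lemma qpoch_finite_commute: "qpoch_finite x q0 q1 = qpoch_finite x q1 q0"
proof -
  have "qpoch_base (x / q0) (1 / q0) q1 = qpoch_base (x / q0) q1 (1 / q0)"
    if "1 < norm q0" "norm q1 < 1" for q0 q1 :: complex
    using qpoch_base_commute[OF norm_inverse_less_one that(2)] that(1) .
  then show ?thesis
    unfolding qpoch_finite_def by metis
qed

definition lattice_monomial :: "complex \<Rightarrow> complex \<Rightarrow> complex \<Rightarrow> int \<times> int \<Rightarrow> complex" where
  "lattice_monomial x a b ml = x * a powi fst ml * b powi snd ml"

definition cone_param :: "int \<Rightarrow> int \<Rightarrow> int \<Rightarrow> int \<Rightarrow> int \<Rightarrow> int \<Rightarrow> nat \<times> nat \<Rightarrow> int \<times> int" where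
  "cone_param m0 l0 m1 l1 m2 l2 jk =
     (m0 + int (fst jk) * m1 + int (snd jk) * m2, l0 + int (fst jk) * l1 + int (snd jk) * l2)"

lemma mem_cone_iff:
  "(m, l) \<in> range (cone_param m0 l0 m1 l1 m2 l2) \<longleftrightarrow>
     (\<exists>j k::int. 0 \<le> j \<and> 0 \<le> k \<and> m = m0 + j * m1 + k * m2 \<and> l = l0 + j * l1 + k * l2)"
proof
  assume "(m, l) \<in> range (cone_param m0 l0 m1 l1 m2 l2)"
  then obtain j k :: nat where "(m, l) = cone_param m0 l0 m1 l1 m2 l2 (j, k)" by auto
  then show "\<exists>j k::int. 0 \<le> j \<and> 0 \<le> k \<and> m = m0 + j * m1 + k * m2 \<and> l = l0 + j * l1 + k * l2"
    by (intro exI[of _ "int j"] exI[of _ "int k"]) (auto simp: cone_param_def)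
next
  assume "\<exists>j k::int. 0 \<le> j \<and> 0 \<le> k \<and> m = m0 + j * m1 + k * m2 \<and> l = l0 + j * l1 + k * l2"
  then obtain j k :: int where "j \<ge> 0" "k \<ge> 0" "m = m0 + j * m1 + k * m2" "l = l0 + j * l1 + k * l2"
    by blast
  then show "(m, l) \<in> range (cone_param m0 l0 m1 l1 m2 l2)"
    by (intro image_eqI[of _ _ "(nat j, nat k)"]) (auto simp: cone_param_def)
qed

text \<open>The hypotheses of the next two lemmas are Presburger formulas, so concrete cone
  decompositions are decided by \<open>presburger\<close>.\<close>

lemma cone_eq_Un_cones:
  assumes "\<forall>m l::int.
      (\<exists>j k::int. 0 \<le> j \<and> 0 \<le> k \<and> m = a0 + j * a1 + k * a2 \<and> l = b0 + j * b1 + k * b2) \<longleftrightarrow>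
      (\<exists>j k::int. 0 \<le> j \<and> 0 \<le> k \<and> m = c0 + j * c1 + k * c2 \<and> l = d0 + j * d1 + k * d2) \<or>
      (\<exists>j k::int. 0 \<le> j \<and> 0 \<le> k \<and> m = e0 + j * e1 + k * e2 \<and> l = f0 + j * f1 + k * f2)"
  shows "range (cone_param a0 b0 a1 b1 a2 b2) =
    range (cone_param c0 d0 c1 d1 c2 d2) \<union> range (cone_param e0 f0 e1 f1 e2 f2)"
proof (rule set_eqI)
  fix ml :: "int \<times> int"
  show "ml \<in> range (cone_param a0 b0 a1 b1 a2 b2) \<longleftrightarrow>
      ml \<in> range (cone_param c0 d0 c1 d1 c2 d2) \<union> range (cone_param e0 f0 e1 f1 e2 f2)"
    using assms by (cases ml) (simp only: Un_iff mem_cone_iff)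
qed

lemma cones_disjoint:
  assumes "\<forall>m l::int. \<not> (
      (\<exists>j k::int. 0 \<le> j \<and> 0 \<le> k \<and> m = c0 + j * c1 + k * c2 \<and> l = d0 + j * d1 + k * d2) \<and>
      (\<exists>j k::int. 0 \<le> j \<and> 0 \<le> k \<and> m = e0 + j * e1 + k * e2 \<and> l = f0 + j * f1 + k * f2))"
  shows "range (cone_param c0 d0 c1 d1 c2 d2) \<inter> range (cone_param e0 f0 e1 f1 e2 f2) = {}"
proof (rule equals0I)
  fix ml :: "int \<times> int"
  assume "ml \<in> range (cone_param c0 d0 c1 d1 c2 d2) \<inter> range (cone_param e0 f0 e1 f1 e2 f2)"
  with assms show False by (cases ml) (simp only: Int_iff mem_cone_iff)
qed

lemma qpoch_base_eq_prod_one_minus_cone: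
  assumes "a \<noteq> 0" "b \<noteq> 0" "norm p < 1" "norm q < 1"
    and "y = x * a powi m0 * b powi l0" "p = a powi m1 * b powi l1" "q = a powi m2 * b powi l2"
    and inj: "inj (cone_param m0 l0 m1 l1 m2 l2)"
  defines "C \<equiv> range (cone_param m0 l0 m1 l1 m2 l2)"
  shows "qpoch_base y p q = prod_one_minus (lattice_monomial x a b) C \<and>
    (\<lambda>ml. norm (lattice_monomial x a b ml)) summable_on C"
proof -
  have g: "(\<lambda>jk::nat \<times> nat. y * p ^ fst jk * q ^ snd jk) = lattice_monomial x a b \<circ> cone_param m0 l0 m1 l1 m2 l2"
  proof
    fix jk :: "nat \<times> nat"
    obtain j k where jk: "jk = (j, k)" by force
    have "y * p ^ j * q ^ k
        = x * a powi m0 * b powi l0 * (a powi m1 * b powi l1) powi int j * (a powi m2 * b powi l2) powi int k"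
      using assms(5-7) by (simp add: power_int_of_nat)
    also have "\<dots> = x * a powi (m0 + int j * m1 + int k * m2) * b powi (l0 + int j * l1 + int k * l2)"
      using assms(1,2)
      by (simp add: power_int_add power_int_mult_distrib power_int_mult power_mult_distrib mult_ac)
    finally show "y * p ^ fst jk * q ^ snd jk = (lattice_monomial x a b \<circ> cone_param m0 l0 m1 l1 m2 l2) jk"
      by (simp add: jk lattice_monomial_def cone_param_def)
  qed
  have "qpoch_base y p q = prod_one_minus (lattice_monomial x a b) C"
    unfolding qpoch_base_eq_prod_one_minus[OF assms(3,4)] g C_def
    by (rule prod_one_minus_reindex) (use inj in simp)
  moreover have "(\<lambda>ml. norm (lattice_monomial x a b ml)) summable_on C"
  proof -
    have "((\<lambda>ml. norm (lattice_monomial x a b ml)) \<circ> cone_param m0 l0 m1 l1 m2 l2) summable_on UNIV"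
      using summable_on_norm_geometric2[OF assms(3,4), of y] g by (simp add: o_def fun_eq_iff)
    then show ?thesis
      unfolding C_def by (subst summable_on_reindex) (use inj in auto)
  qed
  ultimately show ?thesis by simp
qed

lemma prod_one_minus_cone_decomposition:
  assumes "Q = prod_one_minus T C \<and> (\<lambda>i. norm (T i)) summable_on C"
    and "Q1 = prod_one_minus T C1 \<and> (\<lambda>i. norm (T i)) summable_on C1"
    and "Q2 = prod_one_minus T C2 \<and> (\<lambda>i. norm (T i)) summable_on C2"
    and "C = C1 \<union> C2" "C1 \<inter> C2 = {}"
  shows "Q = Q1 * Q2"
  using assms prod_one_minus_Un_disjoint[of T C1 C2] by simp

section \<open>The two-factor identity\<close>

lemma qpoch_mult_inside:
  assumes a: "a \<noteq> 0" and ab: "norm a < norm b" and b1: "norm b < 1"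
    and fin: "qpoch_finite x a (b/a)"
  shows "qpoch x a (b/a) * qpoch x (a/b) b = qpoch x a b \<and> qpoch_finite x a b"
proof -
  have b: "b \<noteq> 0" using ab by auto
  have norms: "norm a < 1" "1 < norm (b/a)" "norm (a/b) < 1" "norm (1/(b/a)) < 1"
    using a b ab b1 by (simp_all add: norm_divide field_simps)
  let ?T = "lattice_monomial x a b"
  let ?C = "range (cone_param 0 0 1 (-1) 0 1)" and ?C1 = "range (cone_param 0 0 1 0 0 1)"
    and ?C2 = "range (cone_param 1 (-1) 1 0 1 (-1))"
  have "qpoch_base x (a/b) b = qpoch_base x a b * qpoch_base (x/(b/a)) a (1/(b/a))"
  proof (rule prod_one_minus_cone_decomposition)
    show "qpoch_base x (a/b) b = prod_one_minus ?T ?C \<and> (\<lambda>i. norm (?T i)) summable_on ?C"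
      by (rule qpoch_base_eq_prod_one_minus_cone)
        (use a b norms b1 in \<open>auto simp: inj_def cone_param_def power_int_minus field_simps\<close>)
    show "qpoch_base x a b = prod_one_minus ?T ?C1 \<and> (\<lambda>i. norm (?T i)) summable_on ?C1"
      by (rule qpoch_base_eq_prod_one_minus_cone)
        (use a b norms b1 in \<open>auto simp: inj_def cone_param_def\<close>)
    show "qpoch_base (x/(b/a)) a (1/(b/a)) = prod_one_minus ?T ?C2 \<and> (\<lambda>i. norm (?T i)) summable_on ?C2"
      by (rule qpoch_base_eq_prod_one_minus_cone)
        (use a b norms in \<open>auto simp: inj_def cone_param_def power_int_minus field_simps\<close>)
    show "?C = ?C1 \<union> ?C2" by (rule cone_eq_Un_cones) presburger
    show "?C1 \<inter> ?C2 = {}" by (rule cones_disjoint) presburger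
  qed
  with fin norms b1 show ?thesis
    unfolding qpoch_def qpoch_finite_def by (auto simp: field_simps)
qed

lemma qpoch_mult_straddle:
  assumes a: "a \<noteq> 0" and a1: "norm a < 1" and b1: "1 < norm b"
    and fin: "qpoch_finite x a (b/a)" "qpoch_finite x (a/b) b"
  shows "qpoch x a (b/a) * qpoch x (a/b) b = qpoch x a b \<and> qpoch_finite x a b"
proof -
  have b: "b \<noteq> 0" using b1 by auto
  have norms: "1 < norm (b/a)" "norm (a/b) < 1" "norm (1/b) < 1" "norm (1/(b/a)) < 1"
    using a b a1 b1 by (simp_all add: norm_divide field_simps)
  let ?T = "lattice_monomial x a (1/b)"
  let ?C = "range (cone_param 0 1 1 0 0 1)" and ?C1 = "range (cone_param 1 1 1 0 1 1)"
    and ?C2 = "range (cone_param 0 1 1 1 0 1)"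
  have "qpoch_base (x/b) a (1/b) = qpoch_base (x/(b/a)) a (1/(b/a)) * qpoch_base (x/b) (a/b) (1/b)"
  proof (rule prod_one_minus_cone_decomposition)
    show "qpoch_base (x/b) a (1/b) = prod_one_minus ?T ?C \<and> (\<lambda>i. norm (?T i)) summable_on ?C"
      by (rule qpoch_base_eq_prod_one_minus_cone)
        (use a b a1 norms in \<open>auto simp: inj_def cone_param_def power_int_minus field_simps\<close>)
    show "qpoch_base (x/(b/a)) a (1/(b/a)) = prod_one_minus ?T ?C1 \<and> (\<lambda>i. norm (?T i)) summable_on ?C1"
      by (rule qpoch_base_eq_prod_one_minus_cone)
        (use a b a1 norms in \<open>auto simp: inj_def cone_param_def power_int_minus field_simps\<close>)
    show "qpoch_base (x/b) (a/b) (1/b) = prod_one_minus ?T ?C2 \<and> (\<lambda>i. norm (?T i)) summable_on ?C2"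
      by (rule qpoch_base_eq_prod_one_minus_cone)
        (use a b norms in \<open>auto simp: inj_def cone_param_def power_int_minus field_simps\<close>)
    show "?C = ?C1 \<union> ?C2" by (rule cone_eq_Un_cones) presburger
    show "?C1 \<inter> ?C2 = {}" by (rule cones_disjoint) presburger
  qed
  with fin a1 b1 norms show ?thesis
    unfolding qpoch_def qpoch_finite_def by (auto simp: field_simps)
qed

lemma qpoch_mult_outside:
  assumes a1: "1 < norm a" and ab: "norm a < norm b"
    and fin: "qpoch_finite x (a/b) b"
  shows "qpoch x a (b/a) * qpoch x (a/b) b = qpoch x a b \<and> qpoch_finite x a b"
proof -
  have a: "a \<noteq> 0" and b: "b \<noteq> 0" using a1 ab by auto
  have norms: "1 < norm b" "1 < norm (b/a)" "norm (a/b) < 1" "norm (1/a) < 1" "norm (1/b) < 1"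
    "norm (1/(b/a)) < 1"
    using a b a1 ab by (simp_all add: norm_divide field_simps)
  let ?T = "lattice_monomial x (1/a) (1/b)"
  let ?C = "range (cone_param 0 1 1 0 (-1) 1)" and ?C1 = "range (cone_param 1 1 1 0 0 1)"
    and ?C2 = "range (cone_param 0 1 (-1) 1 0 1)"
  have "qpoch_base (x/(a*(b/a))) (1/a) (1/(b/a)) = qpoch_base (x/(a*b)) (1/a) (1/b) * qpoch_base (x/b) (a/b) (1/b)"
  proof (rule prod_one_minus_cone_decomposition)
    show "qpoch_base (x/(a*(b/a))) (1/a) (1/(b/a)) = prod_one_minus ?T ?C \<and> (\<lambda>i. norm (?T i)) summable_on ?C"
      by (rule qpoch_base_eq_prod_one_minus_cone)
        (use a b norms in \<open>auto simp: inj_def cone_param_def power_int_minus field_simps\<close>)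
    show "qpoch_base (x/(a*b)) (1/a) (1/b) = prod_one_minus ?T ?C1 \<and> (\<lambda>i. norm (?T i)) summable_on ?C1"
      by (rule qpoch_base_eq_prod_one_minus_cone)
        (use a b norms in \<open>auto simp: inj_def cone_param_def power_int_minus field_simps\<close>)
    show "qpoch_base (x/b) (a/b) (1/b) = prod_one_minus ?T ?C2 \<and> (\<lambda>i. norm (?T i)) summable_on ?C2"
      by (rule qpoch_base_eq_prod_one_minus_cone)
        (use a b norms in \<open>auto simp: inj_def cone_param_def power_int_minus field_simps\<close>)
    show "?C = ?C1 \<union> ?C2" by (rule cone_eq_Un_cones) presburger
    show "?C1 \<inter> ?C2 = {}" by (rule cones_disjoint) presburger
  qed
  with fin a1 norms show ?thesis
    unfolding qpoch_def qpoch_finite_def by (auto simp: field_simps)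
qed

lemma qpoch_mult_ordered:
  assumes "a \<noteq> 0" "norm a \<noteq> 1" "norm b \<noteq> 1" "norm a < norm b"
    and "qpoch_finite x a (b/a)" "qpoch_finite x (a/b) b"
  shows "qpoch x a (b/a) * qpoch x (a/b) b = qpoch x a b \<and> qpoch_finite x a b"
proof -
  consider "norm b < 1" | "norm a < 1" "1 < norm b" | "1 < norm a"
    using assms(2,3) by linarith
  then show ?thesis
    by cases (use assms qpoch_mult_inside qpoch_mult_straddle qpoch_mult_outside in blast)+
qed

lemma qpoch_mult:
  assumes "a \<noteq> 0" "b \<noteq> 0" "norm a \<noteq> 1" "norm b \<noteq> 1" "norm a \<noteq> norm b"
    and "qpoch_finite x a (b/a)" "qpoch_finite x (a/b) b"
  shows "qpoch x a (b/a) * qpoch x (a/b) b = qpoch x a b \<and> qpoch_finite x a b"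
proof (cases "norm a < norm b")
  case True
  with assms show ?thesis by (intro qpoch_mult_ordered) auto
next
  case False
  with assms have "norm b < norm a" by linarith
  with assms have "qpoch x b (a/b) * qpoch x (b/a) a = qpoch x b a \<and> qpoch_finite x b a"
    by (intro qpoch_mult_ordered) (auto simp: qpoch_finite_commute)
  moreover have "qpoch x b (a/b) = qpoch x (a/b) b" "qpoch x (b/a) a = qpoch x a (b/a)"
    "qpoch x b a = qpoch x a b" "qpoch_finite x b a = qpoch_finite x a b"
    by (rule qpoch_commute qpoch_finite_commute)+
  ultimately show ?thesis by (simp add: mult.commute)
qed

lemma e2pi_add: "e2pi (c + d) = e2pi c * e2pi d"
  by (simp add: e2pi_def distrib_left exp_add)

lemma e2pi_nonzero: "e2pi c \<noteq> 0"
  by (simp add: e2pi_def)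

lemma e2pi_minus: "e2pi (- c) = 1 / e2pi c"
  by (simp add: e2pi_def exp_minus[symmetric] divide_inverse)

lemma norm_e2pi: "norm (e2pi c) = exp (- 2 * pi * Im c)"
  by (simp add: e2pi_def norm_exp_eq_Re)

lemma norm_e2pi_eq_iff: "norm (e2pi c) = norm (e2pi d) \<longleftrightarrow> Im c = Im d"
  by (simp add: norm_e2pi)

lemma norm_e2pi_eq_1_iff: "norm (e2pi c) = 1 \<longleftrightarrow> c \<in> \<real>"
  by (simp add: norm_e2pi complex_is_Real_iff)

lemma qpoch_e2pi_mult:
  assumes "A \<notin> \<real>" "C \<notin> \<real>" "A + C \<notin> \<real>"
    and "qpoch_finite x (e2pi A) (e2pi (- (A + C)))" "qpoch_finite x (e2pi (A + C)) (e2pi (- C))"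
  shows "qpoch x (e2pi A) (e2pi (- (A + C))) * qpoch x (e2pi (A + C)) (e2pi (- C)) = qpoch x (e2pi A) (e2pi (- C))
    \<and> qpoch_finite x (e2pi A) (e2pi (- C))"
proof -
  let ?a = "e2pi A" and ?b = "e2pi (- C)"
  have quot: "e2pi (- (A + C)) = ?b / ?a" "e2pi (A + C) = ?a / ?b"
    unfolding e2pi_minus[of "A + C"] e2pi_minus[of C] e2pi_add by (simp_all add: e2pi_nonzero)
  have "norm ?a \<noteq> 1" "norm ?b \<noteq> 1"
    using assms(1,2) by (simp_all add: norm_e2pi_eq_1_iff complex_is_Real_iff)
  moreover have "norm ?a \<noteq> norm ?b"
    using assms(3) by (simp add: norm_e2pi_eq_iff complex_is_Real_iff)
  ultimately show ?thesis
    using qpoch_mult[OF e2pi_nonzero e2pi_nonzero] assms(4,5) unfolding quot by blast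
qed

section \<open>Unimodular fans\<close>

lemma icross_self [simp]: "icross a a = 0"
  by (simp add: icross_def)

lemma icross_unimodular_sum:
  assumes "icross a b = 1" "icross b c = 1"
  shows "fst a + fst c = icross a c * fst b \<and> snd a + snd c = icross a c * snd b"
  using assms unfolding icross_def by algebra

lemma ccross_add:
  assumes "fst b = fst a + fst c" "snd b = snd a + snd c"
  shows "ccross \<omega> b = ccross \<omega> a + ccross \<omega> c"
  using assms by (simp add: ccross_def algebra_simps)

text \<open>Discrete maximum principle: at the first interior maximum \<open>M \<ge> 2\<close> of \<open>h\<close>
  the relation \<open>c i * M = h (i - 1) + h (i + 1)\<close> with \<open>0 < h (i - 1) < M\<close> and
  \<open>0 < h (i + 1) \<le> M\<close> forces \<open>c i = 1\<close>.\<close>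

lemma exists_unit_coefficient_at_first_max:
  fixes h c :: "nat \<Rightarrow> int"
  assumes "1 \<le> n" "h 0 = 1" "h (Suc n) = 1" and interior: "\<And>k. 1 \<le> k \<Longrightarrow> k \<le> n \<Longrightarrow> 2 \<le> h k"
    and rel: "\<And>i. 1 \<le> i \<Longrightarrow> i \<le> n \<Longrightarrow> c i * h i = h (i - 1) + h (Suc i)"
  shows "\<exists>i. 1 \<le> i \<and> i \<le> n \<and> c i = 1"
proof -
  define M where "M = Max (h ` {..Suc n})"
  have le_M: "h k \<le> M" if "k \<le> Suc n" for k
    unfolding M_def using that by (intro Max_ge) auto
  have pos: "1 \<le> h k" if "k \<le> Suc n" for k
    using assms(2,3) interior[of k] that by (cases "k = 0 \<or> k = Suc n") auto
  have M2: "2 \<le> M" using le_M[of 1] interior[of 1] assms(1) by simp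
  have "M \<in> h ` {..Suc n}" unfolding M_def by (intro Max_in) auto
  then obtain k0 where k0: "k0 \<le> Suc n" "h k0 = M" by auto
  define i where "i = (LEAST k. k \<le> Suc n \<and> h k = M)"
  have i: "i \<le> Suc n" "h i = M"
    using LeastI[of "\<lambda>k. k \<le> Suc n \<and> h k = M" k0] k0 unfolding i_def by auto
  have before_i: "h k \<noteq> M" if "k < i" for k
    using not_less_Least[of k "\<lambda>k. k \<le> Suc n \<and> h k = M"] that i(1) unfolding i_def by auto
  have i_interior: "1 \<le> i" "i \<le> n"
    using i assms(2,3) M2 by (cases i; auto simp: le_Suc_eq)+
  have "h (i - 1) < M" using before_i[of "i - 1"] le_M[of "i - 1"] i_interior by fastforce
  moreover have "h (Suc i) \<le> M" using le_M[of "Suc i"] i_interior by simp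
  moreover have "1 \<le> h (i - 1)" "1 \<le> h (Suc i)" using pos i_interior by auto
  moreover have "c i * M = h (i - 1) + h (Suc i)" using rel[OF i_interior] i(2) by simp
  ultimately have "0 < c i * M" "c i * M < 2 * M" by linarith+
  then have "0 < c i" "c i < 2"
    using M2 by (simp_all add: zero_less_mult_iff mult_less_cancel_right)
  with i_interior show ?thesis by auto
qed

lemma unimodular_fan_removable:
  assumes "1 \<le> n"
    and chain: "\<And>i. i \<le> n \<Longrightarrow> icross (u i) (u (Suc i)) = 1"
    and ends: "icross (u 0) (u (Suc n)) = 1"
    and pos: "\<And>i. 1 \<le> i \<Longrightarrow> i \<le> n \<Longrightarrow> 0 < icross (u i) (u (Suc n)) \<and> 0 < icross (u 0) (u i)"
  shows "\<exists>i. 1 \<le> i \<and> i \<le> n \<and> icross (u (i - 1)) (u (Suc i)) = 1"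
proof (rule exists_unit_coefficient_at_first_max[OF assms(1)])
  let ?h = "\<lambda>k. icross (u k) (u (Suc n)) + icross (u 0) (u k)"
  show "?h 0 = 1" "?h (Suc n) = 1" using ends by simp_all
  show "2 \<le> ?h k" if "1 \<le> k" "k \<le> n" for k using pos[OF that] by simp
  show "icross (u (i - 1)) (u (Suc i)) * ?h i = ?h (i - 1) + ?h (Suc i)" if "1 \<le> i" "i \<le> n" for i
  proof -
    have "icross (u (i - 1)) (u i) = 1" "icross (u i) (u (Suc i)) = 1"
      using chain[of "i - 1"] chain[of i] that by simp_all
    from icross_unimodular_sum[OF this] show ?thesis
      unfolding icross_def by algebra
  qed
qed

definition seq_delete :: "nat \<Rightarrow> (nat \<Rightarrow> 'a) \<Rightarrow> nat \<Rightarrow> 'a" where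
  "seq_delete i u k = (if k < i then u k else u (Suc k))"

lemma seq_delete_consecutive:
  assumes "\<And>k. k \<le> n \<Longrightarrow> Q (u k) (u (Suc k))" "1 \<le> i" "Q (u (i - 1)) (u (Suc i))" "k < n"
  shows "Q (seq_delete i u k) (seq_delete i u (Suc k))"
proof (cases "Suc k = i")
  case True
  then have "k = i - 1" by simp
  with True assms(3) show ?thesis by (simp add: seq_delete_def)
next
  case False
  with assms(1)[of k] assms(1)[of "Suc k"] assms(4) show ?thesis
    by (auto simp: seq_delete_def)
qed

lemma prod_atMost_merge_adjacent:
  fixes f :: "nat \<Rightarrow> 'a::comm_monoid_mult"
  assumes "j < n"
  shows "(\<Prod>k\<le>n. f k) = (\<Prod>k<n. if k < j then f k else if k = j then f j * f (Suc j) else f (Suc k))"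
  using assms
proof (induction n)
  case 0
  then show ?case by simp
next
  case (Suc m)
  show ?case
  proof (cases "j < m")
    case True
    then show ?thesis using Suc.IH by simp
  next
    case False
    with Suc.prems have j: "j = m" by simp
    have "(\<Prod>k\<le>Suc m. f k) = (\<Prod>k<m. f k) * f m * f (Suc m)"
      by (simp add: lessThan_Suc_atMost[symmetric])
    also have "(\<Prod>k<m. f k) = (\<Prod>k<m. if k < j then f k else if k = j then f j * f (Suc j) else f (Suc k))"
      using j by (intro prod.cong) auto
    finally show ?thesis using j by (simp add: mult.assoc)
  qed
qed

lemma prod_chain_seq_delete:
  fixes F :: "'a \<Rightarrow> 'a \<Rightarrow> 'b::comm_monoid_mult"
  assumes "1 \<le> i" "i \<le> n"
    and "F (u (i - 1)) (u i) * F (u i) (u (Suc i)) = F (u (i - 1)) (u (Suc i))"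
  shows "(\<Prod>k\<le>n. F (u k) (u (Suc k))) = (\<Prod>k<n. F (seq_delete i u k) (seq_delete i u (Suc k)))"
proof -
  define f where "f k = F (u k) (u (Suc k))" for k
  have "(\<Prod>k\<le>n. f k)
      = (\<Prod>k<n. if k < i - 1 then f k else if k = i - 1 then f (i - 1) * f (Suc (i - 1)) else f (Suc k))"
    by (rule prod_atMost_merge_adjacent) (use assms in simp)
  also have "\<dots> = (\<Prod>k<n. F (seq_delete i u k) (seq_delete i u (Suc k)))"
    by (rule prod.cong) (use assms in \<open>auto simp: f_def seq_delete_def\<close>)
  finally show ?thesis by (simp add: f_def)
qed

text \<open>Deleting a vector that is the sum of its neighbours keeps the fan unimodular, so the
  product telescopes by induction on the number of interior vectors.\<close>

lemma unimodular_chain_prod_telescopes: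
  fixes F :: "int \<times> int \<Rightarrow> int \<times> int \<Rightarrow> 'a::comm_monoid_mult"
    and P :: "int \<times> int \<Rightarrow> int \<times> int \<Rightarrow> bool"
  assumes merge: "\<And>a b c. icross a b = 1 \<Longrightarrow> icross b c = 1 \<Longrightarrow> icross a c = 1 \<Longrightarrow>
      P a b \<Longrightarrow> P b c \<Longrightarrow> F a b * F b c = F a c \<and> P a c"
    and "\<And>i. i \<le> n \<Longrightarrow> icross (u i) (u (Suc i)) = 1"
    and "icross (u 0) (u (Suc n)) = 1"
    and "\<And>i. 1 \<le> i \<Longrightarrow> i \<le> n \<Longrightarrow> 0 < icross (u i) (u (Suc n)) \<and> 0 < icross (u 0) (u i)"
    and "\<And>i. i \<le> n \<Longrightarrow> P (u i) (u (Suc i))"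
  shows "(\<Prod>i\<le>n. F (u i) (u (Suc i))) = F (u 0) (u (Suc n))"
  using assms(2-)
proof (induction n arbitrary: u)
  case 0
  then show ?case by simp
next
  case (Suc m)
  note chain = Suc.prems(1) and ends = Suc.prems(2) and pos = Suc.prems(3) and P = Suc.prems(4)
  obtain i where i: "1 \<le> i" "i \<le> Suc m" and ic: "icross (u (i - 1)) (u (Suc i)) = 1"
    using unimodular_fan_removable[of "Suc m" u] chain ends pos by auto
  have "icross (u (i - 1)) (u i) = 1" "icross (u i) (u (Suc i)) = 1"
    using chain[of "i - 1"] chain[of i] i by simp_all
  with ic have merged: "F (u (i - 1)) (u i) * F (u i) (u (Suc i)) = F (u (i - 1)) (u (Suc i))
      \<and> P (u (i - 1)) (u (Suc i))"
    using merge P[of "i - 1"] P[of i] i by simp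
  let ?v = "seq_delete i u"
  have "(\<Prod>k\<le>Suc m. F (u k) (u (Suc k))) = (\<Prod>k<Suc m. F (?v k) (?v (Suc k)))"
    using prod_chain_seq_delete[OF i] merged by blast
  also have "\<dots> = (\<Prod>k\<le>m. F (?v k) (?v (Suc k)))"
    by (simp add: lessThan_Suc_atMost)
  also have "\<dots> = F (?v 0) (?v (Suc m))"
  proof (rule Suc.IH)
    fix k assume "k \<le> m"
    then have k: "k < Suc m" by simp
    show "icross (?v k) (?v (Suc k)) = 1"
      by (rule seq_delete_consecutive[where Q = "\<lambda>a b. icross a b = 1", OF chain i(1) ic k])
    show "P (?v k) (?v (Suc k))"
      by (rule seq_delete_consecutive[where Q = P and u = u, OF P i(1) conjunct2[OF merged] k])
  next
    show "icross (?v 0) (?v (Suc m)) = 1" using ends i by (simp add: seq_delete_def)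
  next
    fix k assume "1 \<le> k" "k \<le> m"
    then show "0 < icross (?v k) (?v (Suc m)) \<and> 0 < icross (?v 0) (?v k)"
      using pos[of k] pos[of "Suc k"] i by (auto simp: seq_delete_def)
  qed
  also have "\<dots> = F (u 0) (u (Suc (Suc m)))"
    using i by (simp add: seq_delete_def)
  finally show ?case .
qed

lemma qpoch_e2pi_ccross_merge:
  assumes "icross a b = 1" "icross b c = 1" "icross a c = 1"
    and "ccross \<omega> a \<notin> \<real>" "ccross \<omega> b \<notin> \<real>" "ccross \<omega> c \<notin> \<real>"
    and "qpoch_finite x (e2pi (ccross \<omega> a)) (e2pi (- ccross \<omega> b))"
    and "qpoch_finite x (e2pi (ccross \<omega> b)) (e2pi (- ccross \<omega> c))"
  shows "qpoch x (e2pi (ccross \<omega> a)) (e2pi (- ccross \<omega> b)) * qpoch x (e2pi (ccross \<omega> b)) (e2pi (- ccross \<omega> c))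
      = qpoch x (e2pi (ccross \<omega> a)) (e2pi (- ccross \<omega> c))
    \<and> qpoch_finite x (e2pi (ccross \<omega> a)) (e2pi (- ccross \<omega> c))"
proof -
  have "ccross \<omega> b = ccross \<omega> a + ccross \<omega> c"
    using icross_unimodular_sum[OF assms(1,2)] assms(3) by (intro ccross_add) simp_all
  with assms(4-8) show ?thesis
    using qpoch_e2pi_mult[of "ccross \<omega> a" "ccross \<omega> c" x] by simp
qed

lemma icross_pos_of_positive_combination:
  assumes "icross v w = 1" "0 < \<alpha>" "0 < \<beta>"
    and "real_of_int (fst u) = \<alpha> * real_of_int (fst v) + \<beta> * real_of_int (fst w)"
    and "real_of_int (snd u) = \<alpha> * real_of_int (snd v) + \<beta> * real_of_int (snd w)"
  shows "0 < icross u w \<and> 0 < icross v u"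
proof -
  have "real_of_int (icross u w) = \<alpha> * real_of_int (icross v w)"
    and "real_of_int (icross v u) = \<beta> * real_of_int (icross v w)"
    unfolding icross_def of_int_diff of_int_mult assms(4,5) by (simp_all add: algebra_simps)
  with assms(1-3) show ?thesis by simp
qed

theorem proposition5p9:
  fixes v w :: "int \<times> int" and u :: "nat \<Rightarrow> int \<times> int" and n :: nat
    and z :: complex and \<omega> :: "complex \<times> complex"
  assumes "primitive v" and "primitive w" and "icross v w = 1"
    and "\<And>i. 1 \<le> i \<Longrightarrow> i \<le> n \<Longrightarrow> primitive (u i)"
    and "\<And>i. 1 \<le> i \<Longrightarrow> i \<le> n \<Longrightarrow>
           \<exists>a b :: real. a > 0 \<and> b > 0 \<and>
             real_of_int (fst (u i)) = a * real_of_int (fst v) + b * real_of_int (fst w) \<and>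
             real_of_int (snd (u i)) = a * real_of_int (snd v) + b * real_of_int (snd w)"
    and "u 0 = v" and "u (Suc n) = w"
    and "\<And>i. i \<le> n \<Longrightarrow> icross (u i) (u (Suc i)) = 1"
    and "\<And>i. i \<le> Suc n \<Longrightarrow> ccross \<omega> (u i) \<notin> \<real>"
    and "\<And>i. i \<le> n \<Longrightarrow>
           qpoch_finite (e2pi z) (e2pi (ccross \<omega> (u i))) (e2pi (- ccross \<omega> (u (Suc i))))"
  shows "(\<Prod>i\<le>n. qpoch (e2pi z) (e2pi (ccross \<omega> (u i))) (e2pi (- ccross \<omega> (u (Suc i)))))
         = qpoch (e2pi z) (e2pi (ccross \<omega> v)) (e2pi (- ccross \<omega> w))"
proof -
  define F where "F a b = qpoch (e2pi z) (e2pi (ccross \<omega> a)) (e2pi (- ccross \<omega> b))" for a b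
  define P where "P a b \<longleftrightarrow> ccross \<omega> a \<notin> \<real> \<and> ccross \<omega> b \<notin> \<real> \<and>
    qpoch_finite (e2pi z) (e2pi (ccross \<omega> a)) (e2pi (- ccross \<omega> b))" for a b
  have "(\<Prod>i\<le>n. F (u i) (u (Suc i))) = F (u 0) (u (Suc n))"
  proof (rule unimodular_chain_prod_telescopes)
    show "F a b * F b c = F a c \<and> P a c"
      if "icross a b = 1" "icross b c = 1" "icross a c = 1" "P a b" "P b c" for a b c
      using qpoch_e2pi_ccross_merge[OF that(1-3)] that(4,5) unfolding F_def P_def by blast
    show "icross (u 0) (u (Suc n)) = 1" using assms(3,6,7) by simp
    show "0 < icross (u i) (u (Suc n)) \<and> 0 < icross (u 0) (u i)" if i: "1 \<le> i" "i \<le> n" for i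
    proof -
      obtain \<alpha> \<beta> :: real where "0 < \<alpha>" "0 < \<beta>"
        "real_of_int (fst (u i)) = \<alpha> * real_of_int (fst v) + \<beta> * real_of_int (fst w)"
        "real_of_int (snd (u i)) = \<alpha> * real_of_int (snd v) + \<beta> * real_of_int (snd w)"
        using assms(5)[OF i] by blast
      from icross_pos_of_positive_combination[OF assms(3) this] show ?thesis
        using assms(6,7) by simp
    qed
    show "P (u i) (u (Suc i))" if "i \<le> n" for i
      using assms(9)[of i] assms(9)[of "Suc i"] assms(10)[OF that] that unfolding P_def by simp
  qed (rule assms(8))
  with assms(6,7) show ?thesis by (simp add: F_def)
qed

end
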